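(* Let $\mathbf k$ be an algebraically closed field of characteristic zero, $n\geq 1$, $\zeta\in\mathbf k$ an $n$-th root of unity, and let $F:\mathcal D_{\zeta,n}\to\langle\delta_1\rangle$ be the functor defined below. Then for every $k\in\mathbb N$ the induced map $\mathrm{Hom}_{\mathcal D_{\zeta,n}}(k,0)\to\mathrm{Hom}_{\mathrm{Vec}_{\mathbb Z_n}^{\zeta}}(\delta_1^{\otimes k},\mathbf 1)$ is surjective.
   Context: $\mathrm{Vec}_{\mathbb Z_n}^{\zeta}$ is the fusion category of finite-dimensional $\mathbb Z_n$-graded $\mathbf k$-vector spaces with graded tensor product, unit $\mathbf 1=\delta_0$, unit isomorphisms identities, and associativity on $(\delta_a\otimes\delta_b)\otimes\delta_c$ given by multiplication by $\zeta^{\,a(b+c-\overline{b+c})/n}$ ($a,b,c\in\{0,\dots,n-1\}$, $\overline{m}$ the remainder of $m$ mod $n$); $\delta_a$ is the simple object concentrated in degree $a$. $\langle\delta_1\rangle$ is the monoidal subcategory (full) of $\mathrm{Vec}_{\mathbb Z_n}^{\zeta}$ with objects $\delta_1^{\otimes k}$, $k\in\mathbb N$. $\mathcal D_{\zeta,n}$ is the strict $\mathbf k$-linear monoidal category with objects $k\in\mathbb N$, $k\otimes l=k+l$, unit $0$, whose morphisms are generated under composition, tensor product and linear combinations by $\mathrm{id}_1$, $f_n:n\to 0$ and $g_n:0\to n$, subject to $f_n\circ g_n=\mathrm{id}_0$, $g_n\circ f_n=\mathrm{id}_n$, and $\mathrm{id}_1\otimes f_n=\zeta\,(f_n\otimes\mathrm{id}_1)$.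 The $\mathbf k$-linear monoidal functor $F$ is defined by $F(1)=\delta_1$, $F(f_n)=\lambda$ the canonical isomorphism $\delta_1^{\otimes n}\xrightarrow{\sim}\mathbf 1$, and $F(g_n)=\lambda^{-1}$. *)

theory Defs
  imports "HOL-Computational_Algebra.Polynomial"
begin

(* Formal morphism expressions of D_{zeta,n}: generators id_0 (identity of the
   unit object 0), id_1, f_n : n -> 0, g_n : 0 -> n, closed under composition
   and tensor product.  Linear combinations are taken separately below. *)
datatype Dmor = DId0 | DId1 | Df | Dg | DComp Dmor Dmor | DTens Dmor Dmor

fun Ddom :: "nat \<Rightarrow> Dmor \<Rightarrow> nat" and Dcod :: "nat \<Rightarrow> Dmor \<Rightarrow> nat" where
  "Ddom n DId0 = 0" | "Ddom n DId1 = 1" | "Ddom n Df = n" | "Ddom n Dg = 0"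
| "Ddom n (DComp g f) = Ddom n f" | "Ddom n (DTens f g) = Ddom n f + Ddom n g"
| "Dcod n DId0 = 0" | "Dcod n DId1 = 1" | "Dcod n Df = 0" | "Dcod n Dg = n"
| "Dcod n (DComp g f) = Dcod n g" | "Dcod n (DTens f g) = Dcod n f + Dcod n g"

fun Dwt :: "nat \<Rightarrow> Dmor \<Rightarrow> bool" where
  "Dwt n (DComp g f) = (Dwt n f \<and> Dwt n g \<and> Dcod n f = Ddom n g)"
| "Dwt n (DTens f g) = (Dwt n f \<and> Dwt n g)"
| "Dwt n _ = True"

(* Vec_{Z_n}^zeta, restricted to the objects delta_1^{\<otimes>k}.  We use the skeletal
   model: delta_a \<otimes> delta_b = delta_{(a+b) mod n}, Hom(delta_a, delta_b) = k if a = b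
   and 0 otherwise, so a morphism delta_1^{\<otimes>k} -> delta_1^{\<otimes>l} (left-bracketed)
   is a scalar, forced to be 0 unless k = l mod n. *)
definition VHom :: "nat \<Rightarrow> nat \<Rightarrow> nat \<Rightarrow> 'a::field set" where
  "VHom n k l = {c. k mod n \<noteq> l mod n \<longrightarrow> c = 0}"

(* associator on (delta_a \<otimes> delta_b) \<otimes> delta_c, a,b,c in {0..n-1}:
   zeta^(a(b+c - (b+c mod n))/n) *)
definition assoc :: "'a::field \<Rightarrow> nat \<Rightarrow> nat \<Rightarrow> nat \<Rightarrow> nat \<Rightarrow> 'a" where
  "assoc \<zeta> n a b c = \<zeta> ^ (a * ((b + c - (b + c) mod n) div n))"

(* monoidal structure J_{k,l} : F(k) \<otimes> F(l) -> F(k+l) of F, with F(k) the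
   left-bracketed power delta_1^{\<otimes>k}; obtained by rebracketing with inverse
   associators: J_{k,0} = id, J_{k,l+1} = (J_{k,l} \<otimes> id) \<circ> alpha^{-1}_{F k, F l, delta_1}. *)
fun coh :: "'a::field \<Rightarrow> nat \<Rightarrow> nat \<Rightarrow> nat \<Rightarrow> 'a" where
  "coh \<zeta> n k 0 = 1"
| "coh \<zeta> n k (Suc l) = coh \<zeta> n k l * inverse (assoc \<zeta> n (k mod n) (l mod n) (1 mod n))"

(* the functor F on morphism expressions: F(id) = id, F(f_n) = lambda (the canonical
   isomorphism delta_1^{\<otimes>n} -> 1, the scalar 1 in the skeletal model),
   F(g_n) = lambda^{-1}, F(g \<circ> f) = F g \<circ> F f,
   F(f \<otimes> g) = J \<circ> (F f \<otimes> F g) \<circ> J^{-1}. *)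
fun Ffun :: "'a::field \<Rightarrow> nat \<Rightarrow> Dmor \<Rightarrow> 'a" where
  "Ffun \<zeta> n DId0 = 1" | "Ffun \<zeta> n DId1 = 1"
| "Ffun \<zeta> n Df = 1" | "Ffun \<zeta> n Dg = inverse 1"
| "Ffun \<zeta> n (DComp g f) = Ffun \<zeta> n g * Ffun \<zeta> n f"
| "Ffun \<zeta> n (DTens f g) =
     coh \<zeta> n (Dcod n f) (Dcod n g) * (Ffun \<zeta> n f * Ffun \<zeta> n g)
       * inverse (coh \<zeta> n (Ddom n f) (Ddom n g))"

end

theory Submission
  imports Defs
begin

text \<open>In the skeletal model \<open>Hom(\<delta>\<^sub>1\<^sup>\<otimes>\<^sup>k, \<one>)\<close> is zero unless \<open>n\<close> divides \<open>k\<close>, and is then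
  the line \<open>\<^bold>k\<close>. The functor sends every morphism expression to a product of associator
  constants, powers of \<open>\<zeta> \<noteq> 0\<close>, and their inverses, hence to a nonzero scalar; so a
  single expression \<open>k \<rightarrow> 0\<close>, namely \<open>f\<^sub>n\<^sup>\<otimes>\<^sup>m\<close> for \<open>k = m n\<close>, already spans the line.\<close>

primrec Df_tens_pow :: "nat \<Rightarrow> Dmor" where
  "Df_tens_pow 0 = DId0"
| "Df_tens_pow (Suc m) = DTens Df (Df_tens_pow m)"

lemma Df_tens_pow_wt [simp]:
  "Dwt n (Df_tens_pow m)" "Ddom n (Df_tens_pow m) = m * n" "Dcod n (Df_tens_pow m) = 0"
  by (induction m) auto

lemma coh_nonzero: "(\<zeta>::'a::field) \<noteq> 0 \<Longrightarrow> coh \<zeta> n k l \<noteq> 0"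
  by (induction l) (auto simp: assoc_def)

lemma Ffun_nonzero: "(\<zeta>::'a::field) \<noteq> 0 \<Longrightarrow> Ffun \<zeta> n t \<noteq> 0"
  by (induction t) (auto simp: coh_nonzero)

lemma VHom_to_unit_eq_zero: "c \<in> VHom n k 0 \<Longrightarrow> \<not> n dvd k \<Longrightarrow> c = 0"
  by (simp add: VHom_def dvd_eq_mod_eq_0)

theorem mainTheorem12:
  fixes \<zeta> :: "'a :: {alg_closed_field, field_char_0}" and n k :: nat
  assumes "n \<ge> 1" and "\<zeta> ^ n = 1"
  shows "\<forall>c \<in> VHom n k 0. \<exists>ts :: ('a \<times> Dmor) list.
           (\<forall>(a, t) \<in> set ts. Dwt n t \<and> Ddom n t = k \<and> Dcod n t = 0) \<and>
           c = (\<Sum>(a, t) \<leftarrow> ts. a * Ffun \<zeta> n t)"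
proof
  fix c :: 'a
  assume c: "c \<in> VHom n k 0"
  show "\<exists>ts :: ('a \<times> Dmor) list.
          (\<forall>(a, t) \<in> set ts. Dwt n t \<and> Ddom n t = k \<and> Dcod n t = 0) \<and>
          c = (\<Sum>(a, t) \<leftarrow> ts. a * Ffun \<zeta> n t)"
  proof (cases "n dvd k")
    case False
    with c have "c = 0" by (rule VHom_to_unit_eq_zero)
    then show ?thesis by (intro exI[of _ "[]"]) simp
  next
    case True
    then obtain m where k: "k = m * n" by (metis dvd_def mult.commute)
    have "\<zeta> \<noteq> 0" using assms by (metis power_0_left not_one_le_zero zero_neq_one)
    then have "Ffun \<zeta> n (Df_tens_pow m) \<noteq> 0" by (rule Ffun_nonzero)
    then show ?thesis
      by (intro exI[of _ "[(c / Ffun \<zeta> n (Df_tens_pow m), Df_tens_pow m)]"]) (simp add: k)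
  qed
qed

end
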